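(* In the Cucker–Smale setting below, for all $n\in\mathbb{N}_0$, $$d_V(t_{2n+1})\le\left(1-\int_{t_{2n}}^{t_{2n+1}}\phi(s)\,ds\right)d_V(t_{2n}),$$ where for $t\ge0$, $\tilde\psi_t:=\min\{\tilde\psi(r):r\in[0,\max_{s\in[0,t]}d_X(s)]\}$ and $\phi(t):=\min\left\{e^{-\tilde KT}\tilde\psi_t,\frac{e^{-\tilde KT}}{T}\right\}$.
   Context: Setting: $N\ge2$; $\tilde\psi:\mathbb{R}\to\mathbb{R}$ positive, bounded, continuous, with $\tilde K:=\|\tilde\psi\|_\infty$ and $\int_0^\infty\min_{r\in[0,x]}\tilde\psi(r)dx=+\infty$; $\{t_n\}_{n\in\mathbb{N}_0}$ increasing, nonnegative, $t_0=0$, $t_n\to\infty$, with $t_{2n+2}-t_{2n+1}<\frac{\ln2}{\tilde K}$ and $t_{2n+1}-t_{2n}>\frac1{\tilde K}$ for all $n$, and $\sum_{p\ge0}\ln\frac{e^{\tilde K(t_{2p+2}-t_{2p+1})}}{2-e^{\tilde K(t_{2p+2}-t_{2p+1})}}<\infty$. A number $T>\frac{\ln2}{\tilde K}$ is fixed such that $t_{2n+1}-t_{2n}\le T$ for all $n\in\mathbb{N}_0$. $\alpha(0)=1$, $\alpha=1$ on $(t_{2n},t_{2n+1})$, $\alpha=-1$ on $[t_{2n+1},t_{2n+2}]$. $\{(x_i,v_i)\}$ solves $x_i'=v_i$, $v_i'(t)=\frac1{N-1}\sum_{j\ne i}\alpha(t)\tilde\psi(|x_i(t)-x_j(t)|)(v_j(t)-v_i(t))$,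 $t>0$, with given initial data in $\mathbb{R}^d$ (continuous, $C^1$ on each $(t_n,t_{n+1})$). $d_X(t):=\max_{i,j}|x_i(t)-x_j(t)|$, $d_V(t):=\max_{i,j}|v_i(t)-v_j(t)|$. *)

theory Defs
  imports "HOL-Analysis.Analysis"
begin

definition cs_alpha :: "(nat \<Rightarrow> real) \<Rightarrow> real \<Rightarrow> real" where
  "cs_alpha tt s =
     (if s = 0 then 1
      else if (\<exists>n. tt (2*n) < s \<and> s < tt (2*n+1)) then 1
      else if (\<exists>n. tt (2*n+1) \<le> s \<and> s \<le> tt (2*n+2)) then -1
      else 0)"

definition diam_at :: "nat \<Rightarrow> (nat \<Rightarrow> real \<Rightarrow> 'a::real_normed_vector) \<Rightarrow> real \<Rightarrow> real" where
  "diam_at N y s = Max {norm (y i s - y j s) | i j. i < N \<and> j < N}"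

definition psi_t :: "(real \<Rightarrow> real) \<Rightarrow> nat \<Rightarrow> (nat \<Rightarrow> real \<Rightarrow> 'a::real_normed_vector) \<Rightarrow> real \<Rightarrow> real" where
  "psi_t \<psi> N x s = Inf (\<psi> ` {0 .. Sup ((\<lambda>r. diam_at N x r) ` {0..s})})"

definition phi_fun :: "(real \<Rightarrow> real) \<Rightarrow> real \<Rightarrow> real \<Rightarrow> nat \<Rightarrow> (nat \<Rightarrow> real \<Rightarrow> 'a::real_normed_vector) \<Rightarrow> real \<Rightarrow> real" where
  "phi_fun \<psi> K T N x s = min (exp (- K * T) * psi_t \<psi> N x s) (exp (- K * T) / T)"

end

theory Submission
  imports Defs
begin

(*
  On a flocking interval (t_{2n}, t_{2n+1}) the sign alpha is +1 and every communication weight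
  psi(|x_i - x_j|) is at least psi_t, the minimum of psi up to the largest position diameter seen
  so far.  Projecting the dynamics onto v_i - v_k for a pair realising d_V shows that
  |v_i - v_k|^2 decreases at rate at least 2 psi_t d_V^2, so the upper right Dini derivative of
  d_V(t)^2 exp(2 int_{t_{2n}}^t psi_t) is nonpositive and d_V(t_{2n+1}) <= exp(-I) d_V(t_{2n})
  with I = int psi_t.  As psi_t <= K and t_{2n+1} - t_{2n} <= T we have 0 <= I <= K T, and on
  that range exp(-I) <= 1 - e^{-K T} I; finally e^{-K T} I dominates the integral of phi.
  Only the flocking interval itself is involved.
*)

lemma exp_minus_le_one_minus_chord:
  fixes a c :: real
  assumes "0 \<le> a" "a \<le> c"
  shows "exp (- a) \<le> 1 - exp (- c) * a"
proof (cases "a = 0")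
  case False
  then have "0 < a"
    using assms by simp
  have "((\<lambda>s. exp (- s)) has_real_derivative - exp (- s)) (at s)" for s
    by (auto intro!: derivative_eq_intros)
  then obtain \<xi> where "0 < \<xi>" "\<xi> < a" "exp (- a) - exp (- 0) = (a - 0) * - exp (- \<xi>)"
    using MVT2[OF \<open>0 < a\<close>, of "\<lambda>s. exp (- s)" "\<lambda>s. - exp (- s)"] by blast
  then have "exp (- a) = 1 - exp (- \<xi>) * a"
    by (simp add: algebra_simps)
  moreover have "exp (- c) * a \<le> exp (- \<xi>) * a"
    using \<open>\<xi> < a\<close> assms by (intro mult_right_mono) auto
  ultimately show ?thesis
    by linarith
qed simp

lemma one_minus_mult_exp_le_one: "(1 - x) * exp x \<le> (1::real)"
  using exp_ge_add_one_self[of "- x"] mult_right_mono[of "1 - x" "exp (- x)" "exp x"]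
  by (simp add: exp_minus)

lemma integrable_on_antimono_on:
  fixes f :: "real \<Rightarrow> real"
  assumes "antimono_on {a..b} f"
  shows "f integrable_on {a..b}"
proof -
  have "(\<lambda>s. - f s) integrable_on {a..b}"
    using assms by (intro integrable_on_mono_on) (auto simp: monotone_on_def)
  then show ?thesis
    using integrable_neg by fastforce
qed

lemma continuous_on_Max:
  fixes f :: "'p \<Rightarrow> 'b::topological_space \<Rightarrow> real"
  assumes "finite P" "P \<noteq> {}" "\<And>p. p \<in> P \<Longrightarrow> continuous_on S (f p)"
  shows "continuous_on S (\<lambda>s. Max ((\<lambda>p. f p s) ` P))"
  using assms
proof (induction P rule: finite_ne_induct)
  case (insert p P)
  then have "(\<lambda>s. Max ((\<lambda>p. f p s) ` insert p P)) = (\<lambda>s. max (f p s) (Max ((\<lambda>p. f p s) ` P)))"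
    by auto
  then show ?case
    using insert by (auto intro!: continuous_on_max)
qed simp

lemma has_real_derivative_inner_self:
  fixes z :: "real \<Rightarrow> 'a::real_inner"
  assumes "(z has_vector_derivative z') (at t)"
  shows "((\<lambda>s. inner (z s) (z s)) has_real_derivative 2 * inner (z t) z') (at t)"
proof -
  have "(z has_derivative (\<lambda>h. h *\<^sub>R z')) (at t)"
    using assms by (simp add: has_vector_derivative_def)
  from has_derivative_inner[OF this this] show ?thesis
    unfolding has_field_derivative_def
    by (rule has_derivative_eq_rhs) (simp add: fun_eq_iff inner_commute algebra_simps)
qed

lemma integral_le_add_antimono:
  fixes g :: "real \<Rightarrow> real"
  assumes g: "antimono_on {a..b} g" and "a \<le> t" "t \<le> s" "s \<le> b"
  shows "integral {a..s} g \<le> integral {a..t} g + (s - t) * g t"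
proof -
  have int: "g integrable_on {c..d}" if "a \<le> c" "d \<le> b" for c d
    by (rule integrable_subinterval_real[OF integrable_on_antimono_on[OF g]]) (use that in auto)
  have "integral {a..s} g = integral {a..t} g + integral {t..s} g"
    using int assms by (intro Henstock_Kurzweil_Integration.integral_combine[symmetric]) auto
  also have "integral {t..s} g \<le> integral {t..s} (\<lambda>_. g t)"
    using int assms by (intro integral_le) (auto simp: monotone_on_def)
  finally show ?thesis
    using \<open>t \<le> s\<close> by simp
qed

lemma le_if_right_Dini_nonpos_Ico:
  fixes F :: "real \<Rightarrow> real"
  assumes "a \<le> b" and cont: "continuous_on {a..b} F"
    and Dini: "\<And>t e. t \<in> {a..<b} \<Longrightarrow> e > 0 \<Longrightarrow> eventually (\<lambda>h. F (t + h) \<le> F t + e * h) (at_right 0)"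
  shows "F b \<le> F a"
proof -
  have slope: "F b \<le> F a + e * (b - a)" if "e > 0" for e
  proof -
    define S where "S = {a..b} \<inter> (\<lambda>s. F s - e * s) -` {..F a - e * a}"
    have "closed S"
      unfolding S_def by (intro continuous_closed_preimage continuous_intros cont)
    moreover have "a \<in> S" "bdd_above S"
      using \<open>a \<le> b\<close> by (auto simp: S_def bdd_above_def)
    ultimately have "Sup S \<in> S"
      using closed_contains_Sup by blast
    have "Sup S = b"
    proof (rule ccontr)
      assume "Sup S \<noteq> b"
      with \<open>Sup S \<in> S\<close> have "Sup S \<in> {a..<b}"
        by (auto simp: S_def)
      then obtain d where "d > 0" and d: "\<And>h. 0 < h \<Longrightarrow> h < d \<Longrightarrow> F (Sup S + h) \<le> F (Sup S) + e * h"
        using Dini[of "Sup S" e] \<open>e > 0\<close> unfolding eventually_at_right_field by auto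
      define h where "h = min (d / 2) (b - Sup S)"
      have h: "0 < h" "h < d" "Sup S + h \<le> b"
        using \<open>d > 0\<close> \<open>Sup S \<in> {a..<b}\<close> by (auto simp: h_def)
      then have "Sup S + h \<in> S"
        using d[of h] \<open>Sup S \<in> S\<close> by (auto simp: S_def algebra_simps)
      then have "Sup S + h \<le> Sup S"
        by (rule cSup_upper[OF _ \<open>bdd_above S\<close>])
      with h show False
        by simp
    qed
    with \<open>Sup S \<in> S\<close> show ?thesis
      by (auto simp: S_def algebra_simps)
  qed
  show ?thesis
  proof (rule field_le_epsilon)
    fix e :: real
    assume "e > 0"
    then have "F b \<le> F a + e / (b - a + 1) * (b - a)"
      using \<open>a \<le> b\<close> by (intro slope) simp
    also have "\<dots> \<le> F a + e"
      using \<open>e > 0\<close> \<open>a \<le> b\<close> by (simp add: field_simps)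
    finally show "F b \<le> F a + e" .
  qed
qed

lemma le_if_right_Dini_nonpos:
  fixes F :: "real \<Rightarrow> real"
  assumes "a < b" and cont: "continuous_on {a..b} F"
    and Dini: "\<And>t e. t \<in> {a<..<b} \<Longrightarrow> e > 0 \<Longrightarrow> eventually (\<lambda>h. F (t + h) \<le> F t + e * h) (at_right 0)"
  shows "F b \<le> F a"
proof -
  have "(F \<longlongrightarrow> F a) (at a within {a..b})"
    using cont \<open>a < b\<close> by (simp add: continuous_on_def)
  then have "(F \<longlongrightarrow> F a) (at_right a)"
    using at_within_Icc_at_right[OF \<open>a < b\<close>] by simp
  moreover have "F b \<le> F a'" if "a < a'" "a' < b" for a'
    by (rule le_if_right_Dini_nonpos_Ico) (use that in \<open>auto intro: Dini continuous_on_subset[OF cont]\<close>)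
  then have "eventually (\<lambda>a'. F b \<le> F a') (at_right a)"
    unfolding eventually_at_right_field using \<open>a < b\<close> by blast
  ultimately show ?thesis
    by (rule tendsto_lowerbound) simp
qed

lemma eventually_at_right_le_deriv:
  fixes f :: "real \<Rightarrow> real"
  assumes "(f has_real_derivative f') (at t)" "e > 0"
  shows "eventually (\<lambda>h. f (t + h) \<le> f t + h * (f' + e)) (at_right 0)"
proof -
  have "((\<lambda>h. (f (t + h) - f t) / h) \<longlongrightarrow> f') (at_right 0)"
    using assms(1) unfolding DERIV_def by (rule filterlim_mono) (simp_all add: at_le)
  then have "eventually (\<lambda>h. (f (t + h) - f t) / h < f' + e) (at_right 0)"
    by (rule order_tendstoD(2)) (use \<open>e > 0\<close> in simp)
  with eventually_at_right_less show ?thesis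
    by eventually_elim (simp add: divide_less_eq algebra_simps)
qed

lemma eventually_at_right_Max_le_active_deriv:
  fixes q :: "'p \<Rightarrow> real \<Rightarrow> real"
  assumes "finite P"
    and deriv: "\<And>p. p \<in> P \<Longrightarrow> (q p has_real_derivative q' p) (at t)"
    and M_le: "\<And>s. \<exists>p\<in>P. M s \<le> q p s"
    and le_M: "\<And>p. p \<in> P \<Longrightarrow> q p t \<le> M t"
    and active: "\<And>p. p \<in> P \<Longrightarrow> q p t = M t \<Longrightarrow> q' p \<le> \<mu>"
    and "e > 0"
  shows "eventually (\<lambda>h. M (t + h) \<le> M t + h * (\<mu> + e)) (at_right 0)"
proof -
  have "eventually (\<lambda>h. q p (t + h) \<le> M t + h * (\<mu> + e)) (at_right 0)" if "p \<in> P" for p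
  proof (cases "q p t = M t")
    case True
    note active[OF \<open>p \<in> P\<close> True]
    from eventually_at_right_le_deriv[OF deriv[OF \<open>p \<in> P\<close>] \<open>e > 0\<close>] eventually_at_right_less
    show ?thesis
    proof eventually_elim
      case (elim h)
      have "h * (q' p + e) \<le> h * (\<mu> + e)"
        using elim \<open>q' p \<le> \<mu>\<close> by (intro mult_left_mono) auto
      then show ?case
        using elim True by linarith
    qed
  next
    case False
    with le_M[OF \<open>p \<in> P\<close>] have "0 < M t - q p t"
      by simp
    moreover have "((\<lambda>h. h * (q' p - \<mu>)) \<longlongrightarrow> 0 * (q' p - \<mu>)) (at_right 0)"
      by (intro tendsto_intros)
    ultimately have "eventually (\<lambda>h. h * (q' p - \<mu>) < M t - q p t) (at_right 0)"
      by (intro order_tendstoD(2)) auto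
    with eventually_at_right_le_deriv[OF deriv[OF \<open>p \<in> P\<close>] \<open>e > 0\<close>] show ?thesis
      by eventually_elim (simp add: ring_distribs)
  qed
  then have "eventually (\<lambda>h. \<forall>p\<in>P. q p (t + h) \<le> M t + h * (\<mu> + e)) (at_right 0)"
    by (intro eventually_ball_finite \<open>finite P\<close>) blast
  then show ?thesis
  proof eventually_elim
    case (elim h)
    obtain p where "p \<in> P" "M (t + h) \<le> q p (t + h)"
      using M_le by blast
    with elim have "q p (t + h) \<le> M t + h * (\<mu> + e)"
      by blast
    with \<open>M (t + h) \<le> q p (t + h)\<close> show ?case
      by linarith
  qed
qed

lemma eventually_at_right_mult_exp_le:
  fixes M G :: "real \<Rightarrow> real"
  assumes M: "\<And>e. e > 0 \<Longrightarrow> eventually (\<lambda>h. M (t + h) \<le> M t + h * (- \<gamma> * M t + e)) (at_right 0)"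
    and G: "eventually (\<lambda>h. G (t + h) \<le> G t + h * \<gamma>) (at_right 0)"
    and M_nonneg: "\<And>s. 0 \<le> M s" and "0 \<le> \<gamma>" and "e > 0"
  shows "eventually (\<lambda>h. M (t + h) * exp (G (t + h)) \<le> M t * exp (G t) + e * h) (at_right 0)"
proof -
  define E where "E = exp (G t)"
  define e' where "e' = e / (2 * E)"
  have "E > 0" "e' > 0"
    using \<open>e > 0\<close> by (simp_all add: E_def e'_def)
  have "((\<lambda>h. exp (h * \<gamma>)) \<longlongrightarrow> exp (0 * \<gamma>)) (at_right (0::real))"
    by (intro tendsto_intros)
  then have "eventually (\<lambda>h. exp (h * \<gamma>) < 2) (at_right 0)"
    by (rule order_tendstoD(2)) simp
  with M[OF \<open>e' > 0\<close>] G eventually_at_right_less show ?thesis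
  proof eventually_elim
    case (elim h)
    define B where "B = M t * (1 - h * \<gamma>) + h * e'"
    have "M (t + h) \<le> B"
      using elim by (simp add: B_def algebra_simps)
    then have "0 \<le> B"
      using M_nonneg[of "t + h"] by linarith
    have "M (t + h) * exp (G (t + h)) \<le> B * exp (G t + h * \<gamma>)"
      using \<open>M (t + h) \<le> B\<close> \<open>0 \<le> B\<close> elim by (intro mult_mono) auto
    also have "\<dots> = E * (M t * ((1 - h * \<gamma>) * exp (h * \<gamma>))) + E * e' * h * exp (h * \<gamma>)"
      by (simp add: B_def E_def exp_add algebra_simps)
    also have "\<dots> \<le> E * (M t * 1) + E * e' * h * 2"
      using \<open>E > 0\<close> \<open>e' > 0\<close> M_nonneg[of t] one_minus_mult_exp_le_one[of "h * \<gamma>"] elim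
      by (intro add_mono mult_left_mono) auto
    also have "\<dots> = M t * exp (G t) + e * h"
      using \<open>E > 0\<close> by (simp add: E_def e'_def)
    finally show ?case .
  qed
qed

lemma diam_at_eq_Max:
  "diam_at N y s = Max ((\<lambda>(i, j). norm (y i s - y j s)) ` ({..<N} \<times> {..<N}))"
  unfolding diam_at_def by (rule arg_cong[where f = Max]) force

lemma continuous_on_diam_at:
  assumes "N > 0" "\<And>i. i < N \<Longrightarrow> continuous_on S (y i)"
  shows "continuous_on S (diam_at N y)"
  unfolding diam_at_eq_Max
  by (rule continuous_on_Max) (use assms in \<open>auto intro!: continuous_intros\<close>)

lemma norm_diff_le_diam_at:
  assumes "i < N" "j < N"
  shows "norm (y i s - y j s) \<le> diam_at N y s"
  unfolding diam_at_eq_Max by (rule Max_ge) (use assms in force)+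

lemma diam_at_attained:
  assumes "N > 0"
  obtains i j where "i < N" "j < N" "diam_at N y s = norm (y i s - y j s)"
proof -
  have "diam_at N y s \<in> (\<lambda>(i, j). norm (y i s - y j s)) ` ({..<N} \<times> {..<N})"
    unfolding diam_at_eq_Max by (rule Max_in) (use assms in auto)
  with that show ?thesis
    by force
qed

lemma diam_at_nonneg:
  assumes "N > 0"
  shows "0 \<le> diam_at N y s"
  using norm_diff_le_diam_at[of 0 N 0 y s] assms by simp

definition cs_field :: "nat \<Rightarrow> (nat \<Rightarrow> nat \<Rightarrow> real) \<Rightarrow> (nat \<Rightarrow> 'a::real_vector) \<Rightarrow> nat \<Rightarrow> 'a" where
  "cs_field N c w i = (1 / (real N - 1)) *\<^sub>R (\<Sum>j\<in>{0..<N} - {i}. c i j *\<^sub>R (w j - w i))"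

lemma inner_cs_field:
  "inner z (cs_field N c w i)
     = (\<Sum>j\<in>{0..<N} - {i}. c i j * (inner z (w j) - inner z (w i))) / (real N - 1)"
  by (simp add: cs_field_def inner_sum_right inner_diff_right)

lemma extremal_pair_projections:
  fixes w :: "nat \<Rightarrow> 'a::real_inner"
  assumes max: "\<And>j l. j < N \<Longrightarrow> l < N \<Longrightarrow> norm (w j - w l) \<le> norm (w i - w k)"
    and "i < N" "j < N" "k < N"
  shows "inner (w i - w k) (w j) \<le> inner (w i - w k) (w i)"
    and "inner (w i - w k) (w k) \<le> inner (w i - w k) (w j)"
proof -
  define z where "z = w i - w k"
  have bound: "inner z (w l - w m) \<le> inner z z" if "l < N" "m < N" for l m
  proof -
    have "inner z (w l - w m) \<le> norm z * norm (w l - w m)"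
      by (rule norm_cauchy_schwarz)
    also have "\<dots> \<le> norm z * norm z"
      using max[OF that] by (simp add: z_def mult_left_mono)
    finally show ?thesis
      by (simp add: dot_square_norm power2_eq_square)
  qed
  from bound[of j k] bound[of i j] assms
  show "inner z (w j) \<le> inner z (w i)" "inner z (w k) \<le> inner z (w j)"
    by (simp_all add: z_def inner_diff_right inner_diff_left)
qed

lemma inner_cs_field_extremal_pair_le:
  fixes w :: "nat \<Rightarrow> 'a::real_inner"
  assumes N: "N \<ge> 2" and "i < N" "k < N"
    and max: "\<And>j l. j < N \<Longrightarrow> l < N \<Longrightarrow> norm (w j - w l) \<le> norm (w i - w k)"
    and "0 \<le> g" and c_ge: "\<And>m j. m < N \<Longrightarrow> j < N \<Longrightarrow> g \<le> c m j"
  shows "inner (w i - w k) (cs_field N c w i - cs_field N c w k) \<le> - g * (norm (w i - w k))\<^sup>2"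
proof -
  define z where "z = w i - w k"
  define p where "p j = inner z (w j)" for j
  have "p i - p k = (norm z)\<^sup>2"
    by (simp add: p_def z_def power2_norm_eq_inner inner_diff_right)
  have p_le: "p j \<le> p i" "p k \<le> p j" if "j < N" for j
    using extremal_pair_projections[OF max \<open>i < N\<close> that \<open>k < N\<close>] by (simp_all add: p_def z_def)
  have "(\<Sum>j\<in>{0..<N} - {i}. c i j * (p j - p i)) \<le> (\<Sum>j\<in>{0..<N} - {i}. g * (p j - p i))"
    using p_le c_ge \<open>i < N\<close> by (intro sum_mono mult_right_mono_neg) auto
  also have "\<dots> = g * (\<Sum>j\<in>{0..<N}. p j - p i)"
    using \<open>i < N\<close> by (simp add: sum_distrib_left sum_diff1)
  finally have sum_i: "(\<Sum>j\<in>{0..<N} - {i}. c i j * (p j - p i)) \<le> g * (\<Sum>j\<in>{0..<N}. p j - p i)" .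
  have "g * (\<Sum>j\<in>{0..<N}. p j - p k) = (\<Sum>j\<in>{0..<N} - {k}. g * (p j - p k))"
    using \<open>k < N\<close> by (simp add: sum_distrib_left sum_diff1)
  also have "\<dots> \<le> (\<Sum>j\<in>{0..<N} - {k}. c k j * (p j - p k))"
    using p_le c_ge \<open>k < N\<close> by (intro sum_mono mult_right_mono) auto
  finally have sum_k: "g * (\<Sum>j\<in>{0..<N}. p j - p k) \<le> (\<Sum>j\<in>{0..<N} - {k}. c k j * (p j - p k))" .
  have "g * (\<Sum>j\<in>{0..<N}. p j - p i) - g * (\<Sum>j\<in>{0..<N}. p j - p k) = - real N * g * (norm z)\<^sup>2"
    using \<open>p i - p k = (norm z)\<^sup>2\<close> by (simp add: sum_subtractf algebra_simps)
  with sum_i sum_k have numerator: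
    "(\<Sum>j\<in>{0..<N} - {i}. c i j * (p j - p i)) - (\<Sum>j\<in>{0..<N} - {k}. c k j * (p j - p k))
       \<le> - real N * g * (norm z)\<^sup>2"
    by linarith
  have "inner z (cs_field N c w i - cs_field N c w k)
      = ((\<Sum>j\<in>{0..<N} - {i}. c i j * (p j - p i)) - (\<Sum>j\<in>{0..<N} - {k}. c k j * (p j - p k)))
        / (real N - 1)"
    unfolding inner_diff_right inner_cs_field p_def by (simp add: diff_divide_distrib)
  also have "\<dots> \<le> - real N * g * (norm z)\<^sup>2 / (real N - 1)"
    using numerator N by (intro divide_right_mono) auto
  also have "\<dots> \<le> - g * (norm z)\<^sup>2"
    using N \<open>0 \<le> g\<close> by (simp add: field_simps mult_right_mono)
  finally show ?thesis
    by (simp add: z_def)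
qed

lemma sq_diam_at_right_Dini_le:
  fixes v :: "nat \<Rightarrow> real \<Rightarrow> 'a::real_inner"
  assumes N: "N \<ge> 2"
    and deriv: "\<And>i. i < N \<Longrightarrow> (v i has_vector_derivative cs_field N c (\<lambda>j. v j t) i) (at t)"
    and "0 \<le> g" and c_ge: "\<And>i j. i < N \<Longrightarrow> j < N \<Longrightarrow> g \<le> c i j" and "e > 0"
  shows "eventually (\<lambda>h. (diam_at N v (t + h))\<^sup>2
           \<le> (diam_at N v t)\<^sup>2 + h * (- 2 * g * (diam_at N v t)\<^sup>2 + e)) (at_right 0)"
proof -
  \<comment> \<open>Squared distances, unlike distances, are differentiable also where two velocities meet.\<close>
  define q where "q = (\<lambda>(i, j) s. inner (v i s - v j s) (v i s - v j s))"
  define q' where "q' = (\<lambda>(i, j).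
    2 * inner (v i t - v j t) (cs_field N c (\<lambda>j. v j t) i - cs_field N c (\<lambda>j. v j t) j))"
  have "N > 0"
    using N by simp
  show ?thesis
  proof (rule eventually_at_right_Max_le_active_deriv[where P = "{..<N} \<times> {..<N}" and q = q and q' = q'])
    fix p
    assume "p \<in> {..<N} \<times> {..<N}"
    then obtain i j where p: "p = (i, j)" "i < N" "j < N"
      by auto
    show "(q p has_real_derivative q' p) (at t)"
      unfolding p q_def q'_def
      by (auto intro!: has_real_derivative_inner_self has_vector_derivative_diff deriv p)
    have "norm (v i t - v j t) \<le> diam_at N v t"
      using p by (intro norm_diff_le_diam_at)
    then show "q p t \<le> (diam_at N v t)\<^sup>2"
      by (simp add: p q_def power_mono flip: power2_norm_eq_inner)
    assume "q p t = (diam_at N v t)\<^sup>2"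
    then have "norm (v i t - v j t) = diam_at N v t"
      using diam_at_nonneg[OF \<open>N > 0\<close>, of v t]
      by (simp add: p q_def power2_eq_iff_nonneg flip: power2_norm_eq_inner)
    then show "q' p \<le> - 2 * g * (diam_at N v t)\<^sup>2"
      using inner_cs_field_extremal_pair_le[OF N p(2,3) _ \<open>0 \<le> g\<close> c_ge, of "\<lambda>j. v j t"]
        norm_diff_le_diam_at[of _ N _ v t] by (simp add: p q'_def)
  next
    show "\<exists>p\<in>{..<N} \<times> {..<N}. (diam_at N v s)\<^sup>2 \<le> q p s" for s
      using diam_at_attained[OF \<open>N > 0\<close>, of v s]
      by (metis (mono_tags) SigmaI case_prod_conv lessThan_iff order_refl power2_norm_eq_inner q_def)
  qed (use \<open>e > 0\<close> in simp_all)
qed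

lemma diam_at_le_exp_integral:
  fixes v :: "nat \<Rightarrow> real \<Rightarrow> 'a::real_inner" and c :: "real \<Rightarrow> nat \<Rightarrow> nat \<Rightarrow> real"
  assumes N: "N \<ge> 2" and "a < b"
    and v_cont: "\<And>i. i < N \<Longrightarrow> continuous_on {a..b} (v i)"
    and v_deriv: "\<And>i t. i < N \<Longrightarrow> t \<in> {a<..<b} \<Longrightarrow>
                    (v i has_vector_derivative cs_field N (c t) (\<lambda>j. v j t) i) (at t)"
    and c_ge: "\<And>t i j. t \<in> {a<..<b} \<Longrightarrow> i < N \<Longrightarrow> j < N \<Longrightarrow> g t \<le> c t i j"
    and g_nonneg: "\<And>t. t \<in> {a..b} \<Longrightarrow> 0 \<le> g t"
    and g_antimono: "antimono_on {a..b} g"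
  shows "diam_at N v b \<le> exp (- integral {a..b} g) * diam_at N v a"
proof -
  define G where "G s = 2 * integral {a..s} g" for s
  define F where "F s = (diam_at N v s)\<^sup>2 * exp (G s)" for s
  have "N > 0"
    using N by simp
  have "continuous_on {a..b} F"
    unfolding F_def G_def
    by (intro continuous_intros continuous_on_diam_at[OF \<open>N > 0\<close>] v_cont
        indefinite_integral_continuous_1 integrable_on_antimono_on g_antimono)
  moreover have "eventually (\<lambda>h. F (t + h) \<le> F t + e * h) (at_right 0)"
    if t: "t \<in> {a<..<b}" and "e > 0" for t e
  proof -
    have "eventually (\<lambda>h. h < b - t) (at_right 0)"
      using t unfolding eventually_at_right_field by (intro exI[of _ "b - t"]) auto
    with eventually_at_right_less
    have "eventually (\<lambda>h. G (t + h) \<le> G t + h * (2 * g t)) (at_right 0)"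
    proof eventually_elim
      case (elim h)
      with t have "integral {a..t + h} g \<le> integral {a..t} g + (t + h - t) * g t"
        by (intro integral_le_add_antimono[OF g_antimono]) auto
      then show ?case
        by (simp add: G_def)
    qed
    moreover have "eventually (\<lambda>h. (diam_at N v (t + h))\<^sup>2
        \<le> (diam_at N v t)\<^sup>2 + h * (- (2 * g t) * (diam_at N v t)\<^sup>2 + e')) (at_right 0)"
      if "e' > 0" for e'
      using sq_diam_at_right_Dini_le[OF N v_deriv g_nonneg c_ge \<open>e' > 0\<close>] t by simp
    ultimately show ?thesis
      unfolding F_def using g_nonneg[of t] t \<open>e > 0\<close>
      by (intro eventually_at_right_mult_exp_le[where \<gamma> = "2 * g t"]) auto
  qed
  ultimately have "F b \<le> F a"
    by (rule le_if_right_Dini_nonpos[OF \<open>a < b\<close>])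
  then have "(diam_at N v b)\<^sup>2 \<le> (diam_at N v a)\<^sup>2 * exp (- 2 * integral {a..b} g)"
    by (simp add: F_def G_def exp_minus field_simps)
  also have "\<dots> = (exp (- integral {a..b} g) * diam_at N v a)\<^sup>2"
    by (simp add: power_mult_distrib flip: exp_of_nat_mult)
  finally show ?thesis
    by (rule power2_le_imp_le) (simp add: diam_at_nonneg[OF \<open>N > 0\<close>])
qed

lemma linear_decay_of_exp_decay:
  fixes g :: "real \<Rightarrow> real"
  assumes decay: "d' \<le> exp (- integral {a..b} g) * d" and "0 \<le> d"
    and "a \<le> b" "b - a \<le> T"
    and g_bounds: "\<And>s. s \<in> {a..b} \<Longrightarrow> 0 \<le> g s \<and> g s \<le> K"
    and g_antimono: "antimono_on {a..b} g"
  shows "d' \<le> (1 - integral {a..b} (\<lambda>s. min (exp (- K * T) * g s) (exp (- K * T) / T))) * d"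
proof -
  define I where "I = integral {a..b} g"
  define c where "c = exp (- K * T)"
  have g_int: "g integrable_on {a..b}"
    using g_antimono by (rule integrable_on_antimono_on)
  have "0 \<le> I"
    unfolding I_def using g_int g_bounds by (intro integral_nonneg) auto
  have "I \<le> integral {a..b} (\<lambda>_. K)"
    unfolding I_def using g_int g_bounds by (intro integral_le) auto
  also have "\<dots> \<le> T * K"
    using \<open>a \<le> b\<close> \<open>b - a \<le> T\<close> g_bounds[of a] by (simp add: mult_right_mono)
  finally have "exp (- I) \<le> 1 - c * I"
    using exp_minus_le_one_minus_chord[OF \<open>0 \<le> I\<close>] by (simp add: c_def mult.commute)
  moreover have "antimono_on {a..b} (\<lambda>s. min (c * g s) (c / T))"
  proof (rule monotone_onI)
    fix r s
    assume "r \<in> {a..b}" "s \<in> {a..b}" "r \<le> s"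
    with g_antimono have "c * g s \<le> c * g r"
      by (intro mult_left_mono) (auto simp: monotone_on_def c_def)
    then show "min (c * g s) (c / T) \<le> min (c * g r) (c / T)"
      by (rule min.mono) simp
  qed
  then have "integral {a..b} (\<lambda>s. min (c * g s) (c / T)) \<le> integral {a..b} (\<lambda>s. c * g s)"
    using integrable_on_antimono_on integrable_on_cmult_left[OF g_int, of c]
    by (intro integral_le) auto
  ultimately have "exp (- I) \<le> 1 - integral {a..b} (\<lambda>s. min (c * g s) (c / T))"
    by (simp add: I_def)
  with decay \<open>0 \<le> d\<close> show ?thesis
    unfolding I_def c_def by (meson mult_right_mono order_trans)
qed

context
  fixes x :: "nat \<Rightarrow> real \<Rightarrow> 'a::real_normed_vector" and N :: nat
  assumes N: "N > 0" and x_cont: "\<And>i. i < N \<Longrightarrow> continuous_on {0..} (x i)"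
begin

lemma diam_at_le_Sup_diam_at:
  assumes "0 \<le> r" "r \<le> s"
  shows "diam_at N x r \<le> Sup (diam_at N x ` {0..s})"
proof -
  have "compact (diam_at N x ` {0..s})"
    using N by (intro compact_continuous_image continuous_on_diam_at)
      (auto intro: continuous_on_subset[OF x_cont])
  then show ?thesis
    using assms by (intro cSup_upper bounded_imp_bdd_above compact_imp_bounded) auto
qed

lemma psi_t_le:
  assumes psi_nonneg: "\<And>r. 0 \<le> \<psi> r" and "0 \<le> s" "0 \<le> r" "r \<le> diam_at N x s"
  shows "psi_t \<psi> N x s \<le> \<psi> r"
  unfolding psi_t_def
  using assms diam_at_le_Sup_diam_at[of s s]
  by (intro cInf_lower bdd_belowI2[where m = 0]) auto

lemma psi_t_le_psi_0:
  assumes "\<And>r. 0 \<le> \<psi> r" and "0 \<le> s"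
  shows "psi_t \<psi> N x s \<le> \<psi> 0"
  using assms diam_at_nonneg[OF N] by (intro psi_t_le) auto

lemma psi_t_nonneg:
  assumes "\<And>r. 0 \<le> \<psi> r" and "0 \<le> s"
  shows "0 \<le> psi_t \<psi> N x s"
  unfolding psi_t_def
  using assms diam_at_le_Sup_diam_at[of s s] diam_at_nonneg[OF N, of x s]
  by (intro cInf_greatest) auto

lemma psi_t_antimono:
  assumes "\<And>r. 0 \<le> \<psi> r"
  shows "antimono_on {0..} (psi_t \<psi> N x)"
proof (rule monotone_onI)
  fix s s' :: real
  assume "s \<in> {0..}" "s' \<in> {0..}" "s \<le> s'"
  then have "Sup (diam_at N x ` {0..s}) \<le> Sup (diam_at N x ` {0..s'})"
    using diam_at_le_Sup_diam_at[of _ s']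
    by (intro cSup_subset_mono bdd_aboveI2) auto
  moreover have "0 \<le> Sup (diam_at N x ` {0..s})"
    using \<open>s \<in> {0..}\<close> diam_at_le_Sup_diam_at[of s s] diam_at_nonneg[OF N, of x s] by auto
  ultimately show "psi_t \<psi> N x s' \<le> psi_t \<psi> N x s"
    unfolding psi_t_def using assms
    by (intro cInf_superset_mono bdd_belowI2[where m = 0]) auto
qed

lemma diam_at_le_exp_integral_psi_t:
  fixes v :: "nat \<Rightarrow> real \<Rightarrow> 'b::real_inner"
  assumes "N \<ge> 2" "0 \<le> a" "a < b" and psi_nonneg: "\<And>r. 0 \<le> \<psi> r"
    and v_cont: "\<And>i. i < N \<Longrightarrow> continuous_on {a..b} (v i)"
    and v_deriv: "\<And>i t. i < N \<Longrightarrow> t \<in> {a<..<b} \<Longrightarrow>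
      (v i has_vector_derivative cs_field N (\<lambda>i j. \<psi> (norm (x i t - x j t))) (\<lambda>j. v j t) i) (at t)"
  shows "diam_at N v b \<le> exp (- integral {a..b} (psi_t \<psi> N x)) * diam_at N v a"
proof (rule diam_at_le_exp_integral[OF \<open>N \<ge> 2\<close> \<open>a < b\<close> v_cont v_deriv])
  show "psi_t \<psi> N x t \<le> \<psi> (norm (x i t - x j t))" if "t \<in> {a<..<b}" "i < N" "j < N" for t i j
    using that \<open>0 \<le> a\<close> by (intro psi_t_le psi_nonneg norm_diff_le_diam_at) auto
  show "antimono_on {a..b} (psi_t \<psi> N x)"
    by (rule monotone_on_subset[OF psi_t_antimono[OF psi_nonneg]]) (use \<open>0 \<le> a\<close> in auto)
qed (use \<open>0 \<le> a\<close> psi_t_nonneg psi_nonneg in auto)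


lemma diam_at_le_one_minus_integral_phi_fun:
  fixes v :: "nat \<Rightarrow> real \<Rightarrow> 'b::real_inner"
  assumes "N \<ge> 2" "0 \<le> a" "a < b" "b - a \<le> T"
    and psi_nonneg: "\<And>r. 0 \<le> \<psi> r" and psi_le_K: "\<And>r. \<psi> r \<le> K"
    and v_cont: "\<And>i. i < N \<Longrightarrow> continuous_on {a..b} (v i)"
    and v_deriv: "\<And>i t. i < N \<Longrightarrow> t \<in> {a<..<b} \<Longrightarrow>
      (v i has_vector_derivative cs_field N (\<lambda>i j. \<psi> (norm (x i t - x j t))) (\<lambda>j. v j t) i) (at t)"
  shows "diam_at N v b \<le> (1 - integral {a..b} (phi_fun \<psi> K T N x)) * diam_at N v a"
  unfolding phi_fun_def[abs_def]
proof (rule linear_decay_of_exp_decay)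
  show "diam_at N v b \<le> exp (- integral {a..b} (psi_t \<psi> N x)) * diam_at N v a"
    using assms(1-3) psi_nonneg v_cont v_deriv by (rule diam_at_le_exp_integral_psi_t)
  show "0 \<le> psi_t \<psi> N x s \<and> psi_t \<psi> N x s \<le> K" if "s \<in> {a..b}" for s
  proof -
    have "0 \<le> s"
      using that \<open>0 \<le> a\<close> by simp
    with psi_t_nonneg[of \<psi> s] psi_t_le_psi_0[of \<psi> s] psi_nonneg psi_le_K[of 0] show ?thesis
      by auto
  qed
  show "antimono_on {a..b} (psi_t \<psi> N x)"
    by (rule monotone_on_subset[OF psi_t_antimono[OF psi_nonneg]]) (use \<open>0 \<le> a\<close> in auto)
qed (use diam_at_nonneg[OF N] assms in auto)

end

lemma le_SUP_abs:
  fixes f :: "'a \<Rightarrow> real"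
  assumes "bounded (range f)"
  shows "f r \<le> (SUP r. \<bar>f r\<bar>)"
proof -
  obtain B where "\<And>r. \<bar>f r\<bar> \<le> B"
    using assms by (auto simp: bounded_iff)
  then have "\<bar>f r\<bar> \<le> (SUP r. \<bar>f r\<bar>)"
    by (intro cSUP_upper bdd_aboveI2) auto
  then show ?thesis
    by simp
qed

lemma cs_alpha_eq_1:
  assumes "tt (2 * n) < s" "s < tt (2 * n + 1)"
  shows "cs_alpha tt s = 1"
  using assms by (auto simp: cs_alpha_def)

theorem proposition7p13:
  fixes N :: nat and \<psi> :: "real \<Rightarrow> real" and K T :: real
    and tt :: "nat \<Rightarrow> real"
    and x v :: "nat \<Rightarrow> real \<Rightarrow> 'a::euclidean_space"
  assumes N: "N \<ge> 2"
    and psi_pos: "\<And>r. \<psi> r > 0"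
    and psi_bdd: "bounded (range \<psi>)"
    and psi_cont: "continuous_on UNIV \<psi>"
    and K_def: "K = (SUP r. \<bar>\<psi> r\<bar>)"
    and psi_div: "filterlim (\<lambda>y. integral {0..y} (\<lambda>z. Inf (\<psi> ` {0..z}))) at_top at_top"
    and t_mono: "strict_mono tt" and t0: "tt 0 = 0"
    and t_lim: "filterlim tt at_top sequentially"
    and gap_neg: "\<And>n. tt (2*n+2) - tt (2*n+1) < ln 2 / K"
    and gap_pos: "\<And>n. tt (2*n+1) - tt (2*n) > 1 / K"
    and sum_fin: "summable (\<lambda>p. ln (exp (K * (tt (2*p+2) - tt (2*p+1)))
                                    / (2 - exp (K * (tt (2*p+2) - tt (2*p+1))))))"
    and T_gt: "T > ln 2 / K"
    and T_bd: "\<And>n. tt (2*n+1) - tt (2*n) \<le> T"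
    and x_cont: "\<And>i. i < N \<Longrightarrow> continuous_on {0..} (x i)"
    and v_cont: "\<And>i. i < N \<Longrightarrow> continuous_on {0..} (v i)"
    and x_deriv: "\<And>i n s. i < N \<Longrightarrow> tt n < s \<Longrightarrow> s < tt (Suc n) \<Longrightarrow>
                    (x i has_vector_derivative v i s) (at s)"
    and v_deriv: "\<And>i n s. i < N \<Longrightarrow> tt n < s \<Longrightarrow> s < tt (Suc n) \<Longrightarrow>
                    (v i has_vector_derivative
                       ((1 / (real N - 1)) *\<^sub>R
                         (\<Sum>j\<in>{0..<N} - {i}.
                            (cs_alpha tt s * \<psi> (norm (x i s - x j s))) *\<^sub>R (v j s - v i s)))) (at s)"
  shows "diam_at N v (tt (2*n+1))
           \<le> (1 - integral {tt (2*n)..tt (2*n+1)} (phi_fun \<psi> K T N x)) * diam_at N v (tt (2*n))"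
proof -
  define a b where "a = tt (2 * n)" and "b = tt (2 * n + 1)"
  have "0 \<le> a" "a < b" "b - a \<le> T"
    using t0 t_mono T_bd[of n] strict_mono_less_eq[OF t_mono, of 0 "2 * n"]
    by (auto simp: a_def b_def strict_mono_less)
  have psi_nonneg: "0 \<le> \<psi> r" and psi_le_K: "\<psi> r \<le> K" for r
    using psi_pos[of r] le_SUP_abs[OF psi_bdd] by (auto simp: K_def)
  have "diam_at N v b \<le> (1 - integral {a..b} (phi_fun \<psi> K T N x)) * diam_at N v a"
  proof (rule diam_at_le_one_minus_integral_phi_fun)
    show "continuous_on {a..b} (v i)" if "i < N" for i
      using v_cont[OF that] by (rule continuous_on_subset) (use \<open>0 \<le> a\<close> in auto)
    show "(v i has_vector_derivative
            cs_field N (\<lambda>i j. \<psi> (norm (x i t - x j t))) (\<lambda>j. v j t) i) (at t)"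
      if "i < N" "t \<in> {a<..<b}" for i t
      using v_deriv[of i "2 * n" t] cs_alpha_eq_1[of tt n t] that
      by (simp add: cs_field_def a_def b_def)
  qed (use N x_cont psi_nonneg psi_le_K \<open>0 \<le> a\<close> \<open>a < b\<close> \<open>b - a \<le> T\<close> in auto)
  then show ?thesis
    by (simp add: a_def b_def)
qed

end
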